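(* Let $u,u_h^{(2)},\tilde u,\tilde u_1,\tilde u_2$ be elements of $\bigcap_{i=1}^N\mathcal{D}(J_i)$. Suppose that, for each $i\in\{1,\dots,N\}$ and each $k\in\{1,2\}$, one has $|J_i(u)-J_i(u_h^{(2)})|<b_h|J_i(u)-J_i(\tilde u_k)|$, for some $b_h<b_0$ with a fixed $b_0\in(0,1)$. Suppose also that for all $i=1,\dots,N$, $$J_i(u_h^{(2)})\notin[\min\{J_i(\tilde u_1),J_i(\tilde u_2)\},\ \max\{J_i(\tilde u_1),J_i(\tilde u_2)\}].$$ Then: if $|J_i(u)-J_i(\tilde u_1)|\le|J_i(u)-J_i(\tilde u_2)|$ for all $i\in\{1,\dots,N\}$, it follows that $J_{\mathfrak{E}}(\tilde u_1)\le J_{\mathfrak{E}}(\tilde u_2)$.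
   Context: Let $U$ be a real Banach space. Let $J_1,\dots,J_N$ be real-valued functionals with domains $\mathcal{D}(J_i)\subseteq U$. In the application, $u$ is the exact solution of a nonlinear problem, $u_h^{(2)}$ is a discrete solution on an enriched finite element space, and $\tilde u$ is a fixed approximation. Write $\vec J(v):=(J_1(v),\dots,J_N(v))$, and for $x\in\mathbb{R}^N$ write $|x|_N:=(|x_1|,\dots,|x_N|)$. For $M\subseteq\mathbb{R}^N$, an error-weighting function is a map $\mathfrak{E}:(\mathbb{R}^+_0)^N\times M\to\mathbb{R}^+_0$ such that for every $m\in M$: - $\mathfrak{E}(\cdot,m)\in\mathcal{C}^1((\mathbb{R}^+_0)^N,\mathbb{R}^+_0)$; - $\mathfrak{E}(\cdot,m)$ is strictly monotonically increasing in each component; - $\mathfrak{E}(0,m)=0$. Fix such an $\mathfrak{E}$ with $\vec J(\tilde u)\in M$, and define $J_{\mathfrak{E}}(v):=\mathfrak{E}(|\vec J(u_h^{(2)})-\vec J(v)|_N,\vec J(\tilde u))$ for $v\in\bigcap_{i=1}^N\mathcal{D}(J_i)$. *)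

theory Defs
  imports "HOL-Analysis.Analysis"
begin

text \<open>The index set {1..N} is modelled by a finite type 'n; vectors in R^N are real^'n.\<close>

definition nonneg_orthant :: "(real^'n) set" where
  "nonneg_orthant = {x. \<forall>i. 0 \<le> x $ i}"

definition C1_on :: "(real^'n) set \<Rightarrow> (real^'n \<Rightarrow> real) \<Rightarrow> bool" where
  "C1_on S f \<longleftrightarrow> (\<exists>f' :: real^'n \<Rightarrow> ((real^'n) \<Rightarrow>\<^sub>L real).
      (\<forall>x\<in>S. (f has_derivative blinfun_apply (f' x)) (at x within S)) \<and> continuous_on S f')"

definition strictly_mono_components :: "(real^'n) set \<Rightarrow> (real^'n \<Rightarrow> real) \<Rightarrow> bool" where
  "strictly_mono_components S f \<longleftrightarrow>
     (\<forall>x\<in>S. \<forall>y\<in>S. \<forall>i. x $ i < y $ i \<and> (\<forall>j. j \<noteq> i \<longrightarrow> x $ j = y $ j) \<longrightarrow> f x < f y)"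

text \<open>Error-weighting function E : (R_0^+)^N x M -> R_0^+ (values outside the domain irrelevant).\<close>
definition error_weighting :: "(real^'n \<Rightarrow> real^'n \<Rightarrow> real) \<Rightarrow> (real^'n) set \<Rightarrow> bool" where
  "error_weighting E M \<longleftrightarrow>
     (\<forall>m\<in>M. (\<forall>x\<in>nonneg_orthant. 0 \<le> E x m)
        \<and> C1_on nonneg_orthant (\<lambda>x. E x m)
        \<and> strictly_mono_components nonneg_orthant (\<lambda>x. E x m)
        \<and> E 0 m = 0)"

definition Jvec :: "('n \<Rightarrow> 'u \<Rightarrow> real) \<Rightarrow> 'u \<Rightarrow> real^'n" where
  "Jvec J v = (\<chi> i. J i v)"

definition absN :: "real^'n \<Rightarrow> real^'n" where
  "absN x = (\<chi> i. \<bar>x $ i\<bar>)"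

definition J_E :: "(real^'n \<Rightarrow> real^'n \<Rightarrow> real) \<Rightarrow> ('n \<Rightarrow> 'u \<Rightarrow> real) \<Rightarrow> 'u \<Rightarrow> 'u \<Rightarrow> 'u \<Rightarrow> real" where
  "J_E E J uh2 ut v = E (absN (Jvec J uh2 - Jvec J v)) (Jvec J ut)"

end

theory Submission
  imports Defs
begin

text \<open>The value \<open>J\<^sub>i(u\<^sub>h)\<close> is not between \<open>J\<^sub>i(\<tilde>u\<^sub>1)\<close> and
  \<open>J\<^sub>i(\<tilde>u\<^sub>2)\<close>, and \<open>J\<^sub>i(u)\<close> is strictly closer to it than to either of them; hence
  \<open>J\<^sub>i(u)\<close> lies on the same side of both \<open>J\<^sub>i(\<tilde>u\<^sub>k)\<close> as \<open>J\<^sub>i(u\<^sub>h)\<close>, and the distances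
  to \<open>J\<^sub>i(u)\<close> are ordered like the distances to \<open>J\<^sub>i(u\<^sub>h)\<close>. So the first argument of the
  error-weighting function is componentwise smaller for \<open>\<tilde>u\<^sub>1\<close> than for \<open>\<tilde>u\<^sub>2\<close>, and a
  function strictly increasing in each component is monotone for the componentwise order,
  as one sees by changing one component at a time.\<close>

lemma strictly_mono_componentsD:
  assumes "strictly_mono_components S f" "x \<in> S" "y \<in> S"
    and "x $ i < y $ i" "\<And>j. j \<noteq> i \<Longrightarrow> x $ j = y $ j"
  shows "f x < f y"
proof -
  have "\<forall>j. j \<noteq> i \<longrightarrow> x $ j = y $ j" using assms(5) by blast
  then show ?thesis
    using assms(1-4) unfolding strictly_mono_components_def by blast
qed

lemma strictly_mono_components_le_partial_update:
  fixes f :: "real^'n::finite \<Rightarrow> real"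
  assumes f: "strictly_mono_components nonneg_orthant f"
    and x: "x \<in> nonneg_orthant" and "x \<le> y" and "finite S"
  shows "f x \<le> f (\<chi> i. if i \<in> S then y $ i else x $ i)"
  using \<open>finite S\<close>
proof (induction S rule: finite_induct)
  case empty
  then show ?case by simp
next
  case (insert k S)
  let ?a = "(\<chi> i. if i \<in> S then y $ i else x $ i) :: real^'n"
  let ?b = "(\<chi> i. if i \<in> insert k S then y $ i else x $ i) :: real^'n"
  have x_le_y: "x $ i \<le> y $ i" for i
    using \<open>x \<le> y\<close> by (simp add: less_eq_vec_def)
  have in_orthant: "?a \<in> nonneg_orthant" "?b \<in> nonneg_orthant"
    using x x_le_y unfolding nonneg_orthant_def by (auto intro: order_trans)
  have "f ?a \<le> f ?b"
  proof (cases "x $ k = y $ k")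
    case True
    then have "?a = ?b" by (auto simp: vec_eq_iff)
    then show ?thesis by simp
  next
    case False
    then have "?a $ k < ?b $ k"
      using insert.hyps(2) x_le_y[of k] by simp
    then have "f ?a < f ?b"
      by (rule strictly_mono_componentsD[OF f in_orthant]) simp
    then show ?thesis by simp
  qed
  then show ?case using insert.IH by linarith
qed

lemma strictly_mono_components_imp_mono_on:
  fixes f :: "real^'n::finite \<Rightarrow> real"
  assumes "strictly_mono_components nonneg_orthant f"
  shows "mono_on nonneg_orthant f"
proof (rule mono_onI)
  fix x y :: "real^'n"
  assume "x \<in> nonneg_orthant" "x \<le> y"
  from strictly_mono_components_le_partial_update[OF assms this finite_class.finite_UNIV]
  show "f x \<le> f y" by simp
qed

lemma error_weighting_mono:
  assumes "error_weighting E M" "m \<in> M" "x \<in> nonneg_orthant" "x \<le> y"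
  shows "E x m \<le> E y m"
proof -
  have "mono_on nonneg_orthant (\<lambda>x. E x m)"
    using assms(1,2) unfolding error_weighting_def
    by (blast intro: strictly_mono_components_imp_mono_on)
  moreover have "y \<in> nonneg_orthant"
    using assms(3,4) unfolding nonneg_orthant_def less_eq_vec_def by (auto intro: order_trans)
  ultimately show ?thesis
    using assms(3,4) by (simp add: mono_on_def)
qed

lemma dist_order_from_closer_outside_point:
  fixes a h x1 x2 :: real
  assumes "\<bar>a - h\<bar> < \<bar>a - x1\<bar>" "\<bar>a - h\<bar> < \<bar>a - x2\<bar>"
    and "h \<notin> {min x1 x2 .. max x1 x2}" and "\<bar>a - x1\<bar> \<le> \<bar>a - x2\<bar>"
  shows "\<bar>h - x1\<bar> \<le> \<bar>h - x2\<bar>"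
  using assms by (auto simp: abs_if split: if_splits)

lemma abs_less_of_abs_less_mult:
  fixes b s t :: real
  assumes "s < b * \<bar>t\<bar>" "b \<le> 1"
  shows "s < \<bar>t\<bar>"
  using assms mult_right_mono[of b 1 "\<bar>t\<bar>"] by simp

theorem mainTheorem4:
  fixes J :: "'n::finite \<Rightarrow> 'u::banach \<Rightarrow> real"
    and D :: "'n \<Rightarrow> 'u set"
    and E :: "real^'n \<Rightarrow> real^'n \<Rightarrow> real"
    and M :: "(real^'n) set"
    and u uh2 ut ut1 ut2 :: 'u
    and bh b0 :: real
  assumes "error_weighting E M"
    and "Jvec J ut \<in> M"
    and "u \<in> (\<Inter>i. D i)" "uh2 \<in> (\<Inter>i. D i)" "ut \<in> (\<Inter>i. D i)"
        "ut1 \<in> (\<Inter>i. D i)" "ut2 \<in> (\<Inter>i. D i)"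
    and "0 < b0" "b0 < 1" "bh < b0"
    and "\<forall>i. \<forall>w\<in>{ut1, ut2}. \<bar>J i u - J i uh2\<bar> < bh * \<bar>J i u - J i w\<bar>"
    and "\<forall>i. J i uh2 \<notin> {min (J i ut1) (J i ut2) .. max (J i ut1) (J i ut2)}"
    and "\<forall>i. \<bar>J i u - J i ut1\<bar> \<le> \<bar>J i u - J i ut2\<bar>"
  shows "J_E E J uh2 ut ut1 \<le> J_E E J uh2 ut ut2"
proof -
  have "bh \<le> 1" using assms(9,10) by linarith
  have closer: "\<bar>J i u - J i uh2\<bar> < \<bar>J i u - J i w\<bar>" if "w \<in> {ut1, ut2}" for i w
    using abs_less_of_abs_less_mult[OF _ \<open>bh \<le> 1\<close>] assms(11) that by blast
  have "\<bar>J i uh2 - J i ut1\<bar> \<le> \<bar>J i uh2 - J i ut2\<bar>" for i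
  proof (rule dist_order_from_closer_outside_point)
    show "\<bar>J i u - J i uh2\<bar> < \<bar>J i u - J i ut1\<bar>" "\<bar>J i u - J i uh2\<bar> < \<bar>J i u - J i ut2\<bar>"
      by (simp_all add: closer)
  qed (use assms(12,13) in simp_all)
  then have "absN (Jvec J uh2 - Jvec J ut1) \<le> absN (Jvec J uh2 - Jvec J ut2)"
    by (simp add: less_eq_vec_def absN_def Jvec_def)
  moreover have "absN (Jvec J uh2 - Jvec J ut1) \<in> nonneg_orthant"
    by (simp add: absN_def nonneg_orthant_def)
  ultimately show ?thesis
    unfolding J_E_def by (intro error_weighting_mono[OF assms(1,2)])
qed

end
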